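(* Let $(S,+)$ be an uncountable semigroup with no idempotent element. Then the following are equivalent: (a) every uncountable IP set $A\subseteq S$ can be partitioned into uncountably many pairwise disjoint sets each of which is an IP set; (b) every uncountable subset of $S$ is an IP set.
   Context: $e$ is idempotent if $e+e=e$. For a sequence $\langle x_n\rangle_{n=1}^\infty$ in $S$, $\mathrm{FS}(\langle x_n\rangle_{n=1}^\infty)$ is the set of all sums $\sum_{n\in H}x_n$ (in increasing order of indices) with $H$ a nonempty finite subset of $\mathbb{N}$. $A\subseteq S$ is an IP set if $\mathrm{FS}(\langle x_n\rangle_{n=1}^\infty)\subseteq A$ for some sequence $\langle x_n\rangle_{n=1}^\infty$ in $S$. *)

theory Defs
  imports Main "HOL-Library.Countable_Set"
begin

fun lsum :: "'a::semigroup_add list \<Rightarrow> 'a" where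
  "lsum [] = undefined"
| "lsum [x] = x"
| "lsum (x # y # xs) = x + lsum (y # xs)"

definition FS :: "(nat \<Rightarrow> 'a::semigroup_add) \<Rightarrow> 'a set" where
  "FS x = {lsum (map x (sorted_list_of_set H)) | H. finite H \<and> H \<noteq> {}}"

definition IP_set :: "'a::semigroup_add set \<Rightarrow> bool" where
  "IP_set A \<longleftrightarrow> (\<exists>x. FS x \<subseteq> A)"

end

theory Submission
  imports Defs
begin

text \<open>(a) implies (b): given an uncountable A, the set A \<union> FS x is an uncountable IP set for any
  sequence x. Split it into uncountably many disjoint IP sets; since FS x is countable, only
  countably many blocks meet it, so some block lies inside A and witnesses that A is an IP set.
  (b) implies (a): every uncountable set splits into uncountably many disjoint uncountable sets,
  which by (b) are IP sets.\<close>

lemma countable_FS: "countable (FS x)"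
proof -
  have "FS x \<subseteq> (\<lambda>H. lsum (map x (sorted_list_of_set H))) ` Collect finite"
    unfolding FS_def by auto
  moreover have "countable ((\<lambda>H. lsum (map x (sorted_list_of_set H))) ` Collect finite)"
    using countable_Collect_finite by (rule countable_image)
  ultimately show ?thesis by (rule countable_subset)
qed

lemma IP_set_mono: "IP_set A \<Longrightarrow> A \<subseteq> B \<Longrightarrow> IP_set B"
  unfolding IP_set_def by blast

lemma IP_set_Un_FS: "IP_set (A \<union> FS x)"
  unfolding IP_set_def by blast

lemma countable_blocks_meeting_countable:
  assumes "pairwise disjnt P" and "countable C"
  shows "countable {B \<in> P. B \<inter> C \<noteq> {}}"
proof -
  let ?Q = "{B \<in> P. B \<inter> C \<noteq> {}}"
  define h where "h B = (SOME c. c \<in> B \<inter> C)" for B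
  have h: "h B \<in> B \<inter> C" if B: "B \<in> ?Q" for B
  proof -
    obtain c where "c \<in> B \<inter> C" using B by blast
    then show ?thesis unfolding h_def by (rule someI)
  qed
  have "inj_on h ?Q"
  proof (rule inj_onI)
    fix B B' assume B: "B \<in> ?Q" and B': "B' \<in> ?Q" and "h B = h B'"
    then have "h B \<in> B \<inter> B'" using h[OF B] h[OF B'] by simp
    then show "B = B'" using assms(1) B B' unfolding pairwise_def disjnt_def by blast
  qed
  have "h ` ?Q \<subseteq> C" using h by (intro image_subsetI) blast
  then have "countable (h ` ?Q)" using assms(2) by (rule countable_subset)
  then show ?thesis using \<open>inj_on h ?Q\<close> by (rule countable_image_inj_on)
qed

lemma uncountable_disjoint_family_avoids_countable:
  assumes "uncountable P" and "pairwise disjnt P" and "countable C"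
  obtains B where "B \<in> P" and "B \<inter> C = {}"
proof -
  have "countable {B \<in> P. B \<inter> C \<noteq> {}}"
    using assms(2,3) by (rule countable_blocks_meeting_countable)
  then have "\<not> P \<subseteq> {B \<in> P. B \<inter> C \<noteq> {}}" using assms(1) countable_subset by blast
  then show ?thesis using that by blast
qed

lemma uncountable_partition_uncountable:
  assumes "uncountable A"
  obtains P where "uncountable P" and "\<Union>P = A" and "\<forall>B\<in>P. uncountable B"
    and "pairwise disjnt P"
proof -
  have "infinite A" using assms countable_finite by blast
  then obtain f where "bij_betw f (A \<times> A) A"
    using card_of_Times_same_infinite card_of_ordIso by blast
  then have inj: "inj_on f (A \<times> A)" and "f ` (A \<times> A) = A"
    unfolding bij_betw_def by auto
  define row where "row a = f ` ({a} \<times> A)" for a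
  have row_uncountable: "uncountable (row a)" if "a \<in> A" for a
  proof -
    have "inj_on (\<lambda>b. f (a, b)) A" using inj that by (auto intro: inj_onI dest: inj_onD)
    moreover have "row a = (\<lambda>b. f (a, b)) ` A" unfolding row_def by auto
    ultimately show ?thesis using assms countable_image_inj_on by metis
  qed
  have row_disjoint: "disjnt (row a) (row a')" if "a \<in> A" "a' \<in> A" "a \<noteq> a'" for a a'
    using that inj unfolding row_def disjnt_def inj_on_def by auto
  have "inj_on row A"
  proof (rule inj_onI)
    fix a a' assume "a \<in> A" "a' \<in> A" "row a = row a'"
    then show "a = a'"
      using row_disjoint row_uncountable unfolding disjnt_def by fastforce
  qed
  then have "uncountable (row ` A)" using assms countable_image_inj_on by blast
  moreover have "\<Union>(row ` A) = A" using \<open>f ` (A \<times> A) = A\<close> unfolding row_def by blast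
  moreover have "pairwise disjnt (row ` A)"
    using row_disjoint by (auto simp: pairwise_def)
  ultimately show ?thesis using that row_uncountable by blast
qed

lemma IP_partition_imp_uncountable_IP:
  fixes A :: "'a::semigroup_add set"
  assumes partition: "\<forall>D::'a set. uncountable D \<and> IP_set D \<longrightarrow>
            (\<exists>P. uncountable P \<and> \<Union>P = D \<and> (\<forall>B\<in>P. IP_set B) \<and> pairwise disjnt P)"
    and "uncountable A"
  shows "IP_set A"
proof -
  fix x :: "nat \<Rightarrow> 'a"
  have "uncountable (A \<union> FS x)" using assms(2) by simp
  from partition[rule_format, OF conjI[OF this IP_set_Un_FS]] obtain P
    where P: "uncountable P" "\<Union>P = A \<union> FS x" "\<forall>B\<in>P. IP_set B" "pairwise disjnt P"
    by (elim exE conjE)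
  obtain B where "B \<in> P" "B \<inter> FS x = {}"
    using uncountable_disjoint_family_avoids_countable[OF P(1,4) countable_FS] .
  have "IP_set B" using P(3) \<open>B \<in> P\<close> ..
  moreover have "B \<subseteq> A" using P(2) \<open>B \<in> P\<close> \<open>B \<inter> FS x = {}\<close> by blast
  ultimately show ?thesis by (rule IP_set_mono)
qed

lemma uncountable_IP_imp_IP_partition:
  fixes A :: "'a::semigroup_add set"
  assumes uncountable_IP: "\<forall>D::'a set. uncountable D \<longrightarrow> IP_set D"
    and "uncountable A"
  shows "\<exists>P. uncountable P \<and> \<Union>P = A \<and> (\<forall>B\<in>P. IP_set B) \<and> pairwise disjnt P"
proof -
  obtain P where "uncountable P" "\<Union>P = A" "\<forall>B\<in>P. uncountable B" "pairwise disjnt P"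
    using uncountable_partition_uncountable[OF \<open>uncountable A\<close>] .
  moreover have "\<forall>B\<in>P. IP_set B" using \<open>\<forall>B\<in>P. uncountable B\<close> uncountable_IP by simp
  ultimately show ?thesis by blast
qed

lemma pairwise_disjnt_iff: "pairwise disjnt P \<longleftrightarrow> (\<forall>B\<in>P. \<forall>C\<in>P. B \<noteq> C \<longrightarrow> B \<inter> C = {})"
  unfolding pairwise_def disjnt_def ..

theorem theorem2p6:
  assumes "uncountable (UNIV :: 'a::semigroup_add set)"
    and "\<forall>e::'a. e + e \<noteq> e"
  shows "(\<forall>A::'a set. uncountable A \<and> IP_set A \<longrightarrow>
            (\<exists>P::'a set set. uncountable P \<and> \<Union>P = A \<and>
                (\<forall>B\<in>P. IP_set B) \<and>
                (\<forall>B\<in>P. \<forall>C\<in>P. B \<noteq> C \<longrightarrow> B \<inter> C = {})))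
     \<longleftrightarrow> (\<forall>A::'a set. uncountable A \<longrightarrow> IP_set A)"
  unfolding pairwise_disjnt_iff [symmetric]
proof (intro iffI allI impI)
  show "IP_set A" if "\<forall>D::'a set. uncountable D \<and> IP_set D \<longrightarrow>
      (\<exists>P. uncountable P \<and> \<Union>P = D \<and> (\<forall>B\<in>P. IP_set B) \<and> pairwise disjnt P)"
    and "uncountable A" for A :: "'a set"
    using that by (rule IP_partition_imp_uncountable_IP)
  show "\<exists>P. uncountable P \<and> \<Union>P = A \<and> (\<forall>B\<in>P. IP_set B) \<and> pairwise disjnt P"
    if "\<forall>D::'a set. uncountable D \<longrightarrow> IP_set D" and "uncountable A \<and> IP_set A" for A :: "'a set"
    by (rule uncountable_IP_imp_IP_partition[OF that(1) conjunct1[OF that(2)]])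
qed

end
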